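(* Let $n,p\ge1$ be integers and let $\mathbf{A}^{p+1}_{n+1}=\langle A;\odot,\Rightarrow,\wedge,\vee,\bot,\top\rangle$ be as defined in the context. Then: (i) $\langle A;\odot,\top\rangle$ is a commutative monoid; (ii) $\le$ is a lattice order on $A$ and $\langle A;\wedge,\vee,\bot,\top\rangle$ is a bounded distributive lattice with least element $\bot=\langle(n,0),0\rangle$ and greatest element $\top=\langle(n,0),p\rangle$; (iii) for all $a,b,c\in A$, $a\odot b\le c$ iff $a\le b\Rightarrow c$; (iv) $\mathbf{A}^{p+1}_{n+1}$ is involutive: for every $a\in A$, $(a\Rightarrow\bot)\Rightarrow\bot=a$.
   Context: Order $\mathbb{Z}\times\mathbb{Z}$ lexicographically: $(m,r)\preccurlyeq(k,s)$ iff $m<k$, or $m=k$ and $r\le s$; addition/subtraction of pairs is componentwise, and $\min,\max$ of pairs refer to $\preccurlyeq$. For an integer $n\ge1$ let $L^\omega_{n+1}=\{(m,r)\in\mathbb{Z}^2:(0,0)\preccurlyeq(m,r)\preccurlyeq(n,0)\}$ with $x\ast y=\max\{(0,0),x+y-(n,0)\}$ and $x\to y=\min\{(n,0),(n,0)-x+y\}$. For an integer $p\ge1$ let $L_{p+1}=\{0,1,\dots,p\}$ with $\alpha\ast\beta=\max\{0,\alpha+\beta-p\}$. Define $$A=A^{p+1}_{n+1}=\{\langle(m,r),\alpha\rangle:(m,r)\in L^\omega_{n+1},\ \alpha\in\{0,p\}\}\cup\{\langle(m,r),\alpha\rangle:(0,0)\preccurlyeq(m,r)\preccurlyeq(n-1,0),\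 0<\alpha<p\}.$$ Order: $\langle(m,r),\alpha\rangle\le\langle(k,s),\beta\rangle$ iff one of: (o1) $\alpha\neq0$, $\alpha\le\beta$ and $(m,r)\preccurlyeq(k,s)$; (o2) $\alpha=\beta=0$ and $(k,s)\preccurlyeq(m,r)$; (o3) $\alpha=0$, $\beta\ne0$ and $(n-1,0)\preccurlyeq(m+k,r+s)$. $\wedge,\vee$ denote meet and join for $\le$. Put $\bot=\langle(n,0),0\rangle$, $\top=\langle(n,0),p\rangle$. For $a=\langle(m,r),\alpha\rangle$, $b=\langle(k,s),\beta\rangle\in A$ define $a\odot b$ by: (P1) if $\alpha,\beta\ge1$ and $\alpha+\beta>p$: $a\odot b=\langle(m,r)\ast(k,s),\alpha+\beta-p\rangle$; (P2) if $\alpha,\beta\ge1$ and $\alpha+\beta\le p$: $a\odot b=\langle\min\{(n,0),(2n-(m+k+1),-(r+s))\},0\rangle$; (P3) if $\alpha\ge1$, $\beta=0$: $a\odot b=\langle(m,r)\to(k,s),0\rangle$, and if $\alpha=0$, $\beta\ge1$: $a\odot b=\langle(k,s)\to(m,r),0\rangle$; (P4) if $\alpha=\beta=0$: $a\odot b=\langle\min\{(n,0),(m+k+1,r+s)\},0\rangle$. Define $\sim\langle(m,r),\alpha\rangle=\langle(m,r),p-\alpha\rangle$ if $\alpha\in\{0,p\}$, and $\sim\langle(m,r),\alpha\rangle=\langle(n-1-m,-r),p-\alpha\rangle$ if $0<\alpha<p$. Define $a\Rightarrow b=\sim(a\odot\sim b)$. The algebra $\mathbf{A}^{p+1}_{n+1}$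 is $\langle A;\odot,\Rightarrow,\wedge,\vee,\bot,\top\rangle$. *)

theory Defs
  imports Main
begin

type_synonym zpair = "int \<times> int"
type_synonym elem = "zpair \<times> int"

definition lex_le :: "zpair \<Rightarrow> zpair \<Rightarrow> bool" where
  "lex_le x y \<longleftrightarrow> fst x < fst y \<or> (fst x = fst y \<and> snd x \<le> snd y)"

definition padd :: "zpair \<Rightarrow> zpair \<Rightarrow> zpair" where
  "padd x y = (fst x + fst y, snd x + snd y)"

definition psub :: "zpair \<Rightarrow> zpair \<Rightarrow> zpair" where
  "psub x y = (fst x - fst y, snd x - snd y)"

definition lmin :: "zpair \<Rightarrow> zpair \<Rightarrow> zpair" where
  "lmin x y = (if lex_le x y then x else y)"

definition lmax :: "zpair \<Rightarrow> zpair \<Rightarrow> zpair" where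
  "lmax x y = (if lex_le x y then y else x)"

definition Lw :: "int \<Rightarrow> zpair set" where
  "Lw n = {x. lex_le (0,0) x \<and> lex_le x (n,0)}"

definition lstar :: "int \<Rightarrow> zpair \<Rightarrow> zpair \<Rightarrow> zpair" where
  "lstar n x y = lmax (0,0) (psub (padd x y) (n,0))"

definition limp :: "int \<Rightarrow> zpair \<Rightarrow> zpair \<Rightarrow> zpair" where
  "limp n x y = lmin (n,0) (padd (psub (n,0) x) y)"

definition Acar :: "int \<Rightarrow> int \<Rightarrow> elem set" where
  "Acar n p = {(x, \<alpha>). x \<in> Lw n \<and> (\<alpha> = 0 \<or> \<alpha> = p)}
            \<union> {(x, \<alpha>). lex_le (0,0) x \<and> lex_le x (n - 1, 0) \<and> 0 < \<alpha> \<and> \<alpha> < p}"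

definition Ale :: "int \<Rightarrow> elem \<Rightarrow> elem \<Rightarrow> bool" where
  "Ale n a b \<longleftrightarrow>
     (case a of (x, \<alpha>) \<Rightarrow> case b of (y, \<beta>) \<Rightarrow>
       (\<alpha> \<noteq> 0 \<and> \<alpha> \<le> \<beta> \<and> lex_le x y)
     \<or> (\<alpha> = 0 \<and> \<beta> = 0 \<and> lex_le y x)
     \<or> (\<alpha> = 0 \<and> \<beta> \<noteq> 0 \<and> lex_le (n - 1, 0) (padd x y)))"

definition is_glb :: "'a set \<Rightarrow> ('a \<Rightarrow> 'a \<Rightarrow> bool) \<Rightarrow> 'a \<Rightarrow> 'a \<Rightarrow> 'a \<Rightarrow> bool" where
  "is_glb S le a b z \<longleftrightarrow> z \<in> S \<and> le z a \<and> le z b \<and> (\<forall>w\<in>S. le w a \<and> le w b \<longrightarrow> le w z)"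

definition is_lub :: "'a set \<Rightarrow> ('a \<Rightarrow> 'a \<Rightarrow> bool) \<Rightarrow> 'a \<Rightarrow> 'a \<Rightarrow> 'a \<Rightarrow> bool" where
  "is_lub S le a b z \<longleftrightarrow> z \<in> S \<and> le a z \<and> le b z \<and> (\<forall>w\<in>S. le a w \<and> le b w \<longrightarrow> le z w)"

definition Ameet :: "int \<Rightarrow> int \<Rightarrow> elem \<Rightarrow> elem \<Rightarrow> elem" where
  "Ameet n p a b = (THE z. is_glb (Acar n p) (Ale n) a b z)"

definition Ajoin :: "int \<Rightarrow> int \<Rightarrow> elem \<Rightarrow> elem \<Rightarrow> elem" where
  "Ajoin n p a b = (THE z. is_lub (Acar n p) (Ale n) a b z)"

definition Abot :: "int \<Rightarrow> elem" where
  "Abot n = ((n, 0), 0)"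

definition Atop :: "int \<Rightarrow> int \<Rightarrow> elem" where
  "Atop n p = ((n, 0), p)"

definition Aprod :: "int \<Rightarrow> int \<Rightarrow> elem \<Rightarrow> elem \<Rightarrow> elem" where
  "Aprod n p a b =
     (case a of ((m, r), \<alpha>) \<Rightarrow> case b of ((k, s), \<beta>) \<Rightarrow>
       if 1 \<le> \<alpha> \<and> 1 \<le> \<beta> \<and> \<alpha> + \<beta> > p then (lstar n (m, r) (k, s), \<alpha> + \<beta> - p)
       else if 1 \<le> \<alpha> \<and> 1 \<le> \<beta> then (lmin (n, 0) (2 * n - (m + k + 1), - (r + s)), 0)
       else if 1 \<le> \<alpha> \<and> \<beta> = 0 then (limp n (m, r) (k, s), 0)
       else if \<alpha> = 0 \<and> 1 \<le> \<beta> then (limp n (k, s) (m, r), 0)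
       else (lmin (n, 0) (m + k + 1, r + s), 0))"

definition Aneg :: "int \<Rightarrow> int \<Rightarrow> elem \<Rightarrow> elem" where
  "Aneg n p a =
     (case a of ((m, r), \<alpha>) \<Rightarrow>
       if \<alpha> = 0 \<or> \<alpha> = p then ((m, r), p - \<alpha>) else ((n - 1 - m, - r), p - \<alpha>))"

definition Aimp :: "int \<Rightarrow> int \<Rightarrow> elem \<Rightarrow> elem \<Rightarrow> elem" where
  "Aimp n p a b = Aneg n p (Aprod n p a (Aneg n p b))"

end

theory Submission
  imports Defs
begin

text \<open>Every law is a finite case analysis in linear arithmetic over lexicographically ordered
  pairs. Two laws are better derived than computed. The involution \<open>\<sim>\<close> reverses the order, so
  joins are de Morgan duals of meets. Residuation follows from associativity and the orthogonality
  \<open>x \<le> \<sim>y \<longleftrightarrow> x \<odot> y \<le> \<bottom>\<close>: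
  \<open>a \<le> \<sim>(b \<odot> \<sim>c) \<longleftrightarrow> a \<odot> b \<odot> \<sim>c \<le> \<bottom> \<longleftrightarrow> a \<odot> b \<le> c\<close>. Finally \<open>\<sim>\<bottom> = \<top>\<close> is the unit, so
  \<open>a \<Rightarrow> \<bottom> = \<sim>a\<close> and involutivity is \<open>\<sim>\<sim>a = a\<close>.\<close>

declare [[smt_timeout = 300]]

lemma The_glb_eq:
  assumes "\<And>x y. x \<in> S \<Longrightarrow> y \<in> S \<Longrightarrow> le x y \<Longrightarrow> le y x \<Longrightarrow> x = y"
    and "is_glb S le a b z"
  shows "(THE z. is_glb S le a b z) = z"
  using assms unfolding is_glb_def by (intro the_equality) auto

lemma The_lub_eq:
  assumes "\<And>x y. x \<in> S \<Longrightarrow> y \<in> S \<Longrightarrow> le x y \<Longrightarrow> le y x \<Longrightarrow> x = y"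
    and "is_lub S le a b z"
  shows "(THE z. is_lub S le a b z) = z"
  using assms unfolding is_lub_def by (intro the_equality) auto

lemma is_lub_antitone_involution:
  assumes closed: "\<And>x. x \<in> S \<Longrightarrow> neg x \<in> S"
    and involutive: "\<And>x. x \<in> S \<Longrightarrow> neg (neg x) = x"
    and antitone: "\<And>x y. x \<in> S \<Longrightarrow> y \<in> S \<Longrightarrow> le x y \<longleftrightarrow> le (neg y) (neg x)"
    and "a \<in> S" "b \<in> S" and glb: "is_glb S le (neg a) (neg b) z"
  shows "is_lub S le a b (neg z)"
proof -
  have z: "z \<in> S" "le z (neg a)" "le z (neg b)"
    using glb by (auto simp: is_glb_def)
  have "le a (neg z)" "le b (neg z)"
    using z antitone[of z] involutive closed \<open>a \<in> S\<close> \<open>b \<in> S\<close> by metis+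
  moreover have "le (neg z) w" if "w \<in> S" "le a w" "le b w" for w
  proof -
    have "le (neg w) z"
      using glb that antitone closed \<open>a \<in> S\<close> \<open>b \<in> S\<close> unfolding is_glb_def by blast
    then show ?thesis
      using antitone[of "neg w" z] involutive closed z(1) that(1) by metis
  qed
  ultimately show ?thesis
    using z closed unfolding is_lub_def by blast
qed

lemma residuation_of_orthogonality:
  assumes mult_closed: "\<And>x y. x \<in> S \<Longrightarrow> y \<in> S \<Longrightarrow> mult x y \<in> S"
    and neg_closed: "\<And>x. x \<in> S \<Longrightarrow> neg x \<in> S"
    and involutive: "\<And>x. x \<in> S \<Longrightarrow> neg (neg x) = x"
    and assoc: "\<And>x y z. x \<in> S \<Longrightarrow> y \<in> S \<Longrightarrow> z \<in> S \<Longrightarrow> mult (mult x y) z = mult x (mult y z)"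
    and orthogonal: "\<And>x y. x \<in> S \<Longrightarrow> y \<in> S \<Longrightarrow> le x (neg y) \<longleftrightarrow> le (mult x y) f"
    and S: "a \<in> S" "b \<in> S" "c \<in> S"
  shows "le (mult a b) c \<longleftrightarrow> le a (neg (mult b (neg c)))"
proof -
  have "le a (neg (mult b (neg c))) \<longleftrightarrow> le (mult a (mult b (neg c))) f"
    using S by (simp add: orthogonal[of a "mult b (neg c)"] mult_closed neg_closed)
  also have "\<dots> \<longleftrightarrow> le (mult (mult a b) (neg c)) f"
    using S by (simp add: assoc neg_closed)
  also have "\<dots> \<longleftrightarrow> le (mult a b) (neg (neg c))"
    using S by (simp add: orthogonal[of "mult a b" "neg c"] mult_closed neg_closed)
  finally show ?thesis
    using S by (simp add: involutive)
qed

lemma lex_le_iff: "lex_le (m, r) (k, s) \<longleftrightarrow> m < k \<or> m = k \<and> r \<le> s"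
  by (simp add: lex_le_def)

lemma mem_Acar_iff:
  "((m, r), \<alpha>) \<in> Acar n p \<longleftrightarrow>
     lex_le (0, 0) (m, r) \<and>
     (lex_le (m, r) (n, 0) \<and> (\<alpha> = 0 \<or> \<alpha> = p) \<or> lex_le (m, r) (n - 1, 0) \<and> 0 < \<alpha> \<and> \<alpha> < p)"
  by (auto simp: Acar_def Lw_def)

lemma Ale_iff:
  "Ale n ((m, r), \<alpha>) ((k, s), \<beta>) \<longleftrightarrow>
     \<alpha> \<noteq> 0 \<and> \<alpha> \<le> \<beta> \<and> lex_le (m, r) (k, s) \<or> \<alpha> = 0 \<and> \<beta> = 0 \<and> lex_le (k, s) (m, r) \<or>
     \<alpha> = 0 \<and> \<beta> \<noteq> 0 \<and> lex_le (n - 1, 0) (m + k, r + s)"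
  by (simp add: Ale_def padd_def)

lemma elem_exhaust: obtains m r \<alpha> where "x = ((m, r), \<alpha>)"
  by (metis surjective_pairing)

definition Ainf :: "int \<Rightarrow> elem \<Rightarrow> elem \<Rightarrow> elem" where
  "Ainf n a b = (case a of ((m, r), \<alpha>) \<Rightarrow> case b of ((k, s), \<beta>) \<Rightarrow>
     if \<alpha> \<noteq> 0 \<and> \<beta> \<noteq> 0 then (lmin (m, r) (k, s), min \<alpha> \<beta>)
     else if \<alpha> = 0 \<and> \<beta> = 0 then (lmax (m, r) (k, s), 0)
     else if \<alpha> = 0 then (lmax (m, r) (n - 1 - k, - s), 0)
     else (lmax (k, s) (n - 1 - m, - r), 0))"

definition Asup :: "int \<Rightarrow> elem \<Rightarrow> elem \<Rightarrow> elem" where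
  "Asup n a b = (case a of ((m, r), \<alpha>) \<Rightarrow> case b of ((k, s), \<beta>) \<Rightarrow>
     if \<alpha> \<noteq> 0 \<and> \<beta> \<noteq> 0 then (lmax (m, r) (k, s), max \<alpha> \<beta>)
     else if \<alpha> = 0 \<and> \<beta> = 0 then (lmin (m, r) (k, s), 0)
     else if \<alpha> = 0 then (lmax (k, s) (n - 1 - m, - r), \<beta>)
     else (lmax (m, r) (n - 1 - k, - s), \<alpha>))"

text \<open>Each operation is described by the linear constraints on the integer components of its
  result. With the result named by fresh variables, a law about the operations is a
  quantifier-free linear integer problem without pair-valued \<open>if\<close>s, which \<open>smt\<close> decides.\<close>

definition prod_graph :: "int \<Rightarrow> int \<Rightarrow> int \<Rightarrow> int \<Rightarrow> int \<Rightarrow> int \<Rightarrow> int \<Rightarrow> int \<Rightarrow> int \<Rightarrow> int \<Rightarrow> int \<Rightarrow> bool"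
  where "prod_graph n p m r \<alpha> k s \<beta> M R \<gamma> \<longleftrightarrow>
   (1 \<le> \<alpha> \<and> 1 \<le> \<beta> \<and> p < \<alpha> + \<beta> \<longrightarrow> \<gamma> = \<alpha> + \<beta> - p \<and>
      (if lex_le (0, 0) (m + k - n, r + s) then M = m + k - n \<and> R = r + s else M = 0 \<and> R = 0)) \<and>
   (1 \<le> \<alpha> \<and> 1 \<le> \<beta> \<and> \<alpha> + \<beta> \<le> p \<longrightarrow> \<gamma> = 0 \<and>
      (if lex_le (n, 0) (2 * n - (m + k + 1), - (r + s)) then M = n \<and> R = 0
       else M = 2 * n - (m + k + 1) \<and> R = - (r + s))) \<and>
   (1 \<le> \<alpha> \<and> \<beta> = 0 \<longrightarrow> \<gamma> = 0 \<and>
      (if lex_le (n, 0) (n - m + k, s - r) then M = n \<and> R = 0 else M = n - m + k \<and> R = s - r)) \<and>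
   (\<alpha> = 0 \<and> 1 \<le> \<beta> \<longrightarrow> \<gamma> = 0 \<and>
      (if lex_le (n, 0) (n - k + m, r - s) then M = n \<and> R = 0 else M = n - k + m \<and> R = r - s)) \<and>
   (\<alpha> = 0 \<and> \<beta> = 0 \<longrightarrow> \<gamma> = 0 \<and>
      (if lex_le (n, 0) (m + k + 1, r + s) then M = n \<and> R = 0 else M = m + k + 1 \<and> R = r + s))"

definition neg_graph :: "int \<Rightarrow> int \<Rightarrow> int \<Rightarrow> int \<Rightarrow> int \<Rightarrow> int \<Rightarrow> int \<Rightarrow> int \<Rightarrow> bool" where
  "neg_graph n p m r \<alpha> M R \<gamma> \<longleftrightarrow> \<gamma> = p - \<alpha> \<and>
     (if \<alpha> = 0 \<or> \<alpha> = p then M = m \<and> R = r else M = n - 1 - m \<and> R = - r)"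

definition inf_graph :: "int \<Rightarrow> int \<Rightarrow> int \<Rightarrow> int \<Rightarrow> int \<Rightarrow> int \<Rightarrow> int \<Rightarrow> int \<Rightarrow> int \<Rightarrow> int \<Rightarrow> bool" where
  "inf_graph n m r \<alpha> k s \<beta> M R \<gamma> \<longleftrightarrow>
   (\<alpha> \<noteq> 0 \<and> \<beta> \<noteq> 0 \<longrightarrow> \<gamma> = min \<alpha> \<beta> \<and>
      (if lex_le (m, r) (k, s) then M = m \<and> R = r else M = k \<and> R = s)) \<and>
   (\<alpha> = 0 \<and> \<beta> = 0 \<longrightarrow> \<gamma> = 0 \<and>
      (if lex_le (m, r) (k, s) then M = k \<and> R = s else M = m \<and> R = r)) \<and>
   (\<alpha> = 0 \<and> \<beta> \<noteq> 0 \<longrightarrow> \<gamma> = 0 \<and>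
      (if lex_le (m, r) (n - 1 - k, - s) then M = n - 1 - k \<and> R = - s else M = m \<and> R = r)) \<and>
   (\<alpha> \<noteq> 0 \<and> \<beta> = 0 \<longrightarrow> \<gamma> = 0 \<and>
      (if lex_le (k, s) (n - 1 - m, - r) then M = n - 1 - m \<and> R = - r else M = k \<and> R = s))"

definition sup_graph :: "int \<Rightarrow> int \<Rightarrow> int \<Rightarrow> int \<Rightarrow> int \<Rightarrow> int \<Rightarrow> int \<Rightarrow> int \<Rightarrow> int \<Rightarrow> int \<Rightarrow> bool" where
  "sup_graph n m r \<alpha> k s \<beta> M R \<gamma> \<longleftrightarrow>
   (\<alpha> \<noteq> 0 \<and> \<beta> \<noteq> 0 \<longrightarrow> \<gamma> = max \<alpha> \<beta> \<and>
      (if lex_le (m, r) (k, s) then M = k \<and> R = s else M = m \<and> R = r)) \<and>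
   (\<alpha> = 0 \<and> \<beta> = 0 \<longrightarrow> \<gamma> = 0 \<and>
      (if lex_le (m, r) (k, s) then M = m \<and> R = r else M = k \<and> R = s)) \<and>
   (\<alpha> = 0 \<and> \<beta> \<noteq> 0 \<longrightarrow> \<gamma> = \<beta> \<and>
      (if lex_le (k, s) (n - 1 - m, - r) then M = n - 1 - m \<and> R = - r else M = k \<and> R = s)) \<and>
   (\<alpha> \<noteq> 0 \<and> \<beta> = 0 \<longrightarrow> \<gamma> = \<alpha> \<and>
      (if lex_le (m, r) (n - 1 - k, - s) then M = n - 1 - k \<and> R = - s else M = m \<and> R = r))"

lemma Aprod_graphE:
  obtains M R \<gamma> where "Aprod n p ((m, r), \<alpha>) ((k, s), \<beta>) = ((M, R), \<gamma>)"
    "prod_graph n p m r \<alpha> k s \<beta> M R \<gamma>"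
proof -
  obtain M R \<gamma> where eq: "Aprod n p ((m, r), \<alpha>) ((k, s), \<beta>) = ((M, R), \<gamma>)"
    by (rule elem_exhaust)
  moreover have "prod_graph n p m r \<alpha> k s \<beta> M R \<gamma>"
    using eq unfolding Aprod_def prod_graph_def lstar_def limp_def lmin_def lmax_def padd_def psub_def
    by (auto simp: algebra_simps split: if_splits)
  ultimately show thesis ..
qed

lemma Aneg_graphE:
  obtains M R \<gamma> where "Aneg n p ((m, r), \<alpha>) = ((M, R), \<gamma>)" "neg_graph n p m r \<alpha> M R \<gamma>"
proof -
  obtain M R \<gamma> where eq: "Aneg n p ((m, r), \<alpha>) = ((M, R), \<gamma>)"
    by (rule elem_exhaust)
  moreover have "neg_graph n p m r \<alpha> M R \<gamma>"
    using eq unfolding Aneg_def neg_graph_def by (auto split: if_splits)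
  ultimately show thesis ..
qed

lemma Ainf_graphE:
  obtains M R \<gamma> where "Ainf n ((m, r), \<alpha>) ((k, s), \<beta>) = ((M, R), \<gamma>)"
    "inf_graph n m r \<alpha> k s \<beta> M R \<gamma>"
proof -
  obtain M R \<gamma> where eq: "Ainf n ((m, r), \<alpha>) ((k, s), \<beta>) = ((M, R), \<gamma>)"
    by (rule elem_exhaust)
  moreover have "inf_graph n m r \<alpha> k s \<beta> M R \<gamma>"
    using eq unfolding Ainf_def inf_graph_def lmin_def lmax_def by (auto split: if_splits)
  ultimately show thesis ..
qed

lemma Asup_graphE:
  obtains M R \<gamma> where "Asup n ((m, r), \<alpha>) ((k, s), \<beta>) = ((M, R), \<gamma>)"
    "sup_graph n m r \<alpha> k s \<beta> M R \<gamma>"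
proof -
  obtain M R \<gamma> where eq: "Asup n ((m, r), \<alpha>) ((k, s), \<beta>) = ((M, R), \<gamma>)"
    by (rule elem_exhaust)
  moreover have "sup_graph n m r \<alpha> k s \<beta> M R \<gamma>"
    using eq unfolding Asup_def sup_graph_def lmin_def lmax_def by (auto split: if_splits)
  ultimately show thesis ..
qed

lemma Aneg_closed: "a \<in> Acar n p \<Longrightarrow> Aneg n p a \<in> Acar n p"
  by (cases a rule: elem_exhaust) (auto simp: Aneg_def mem_Acar_iff lex_le_iff)

lemma Aneg_Aneg: "a \<in> Acar n p \<Longrightarrow> Aneg n p (Aneg n p a) = a"
  by (cases a rule: elem_exhaust) (auto simp: Aneg_def mem_Acar_iff)

lemma Aneg_Abot: "Aneg n p (Abot n) = Atop n p"
  by (simp add: Aneg_def Abot_def Atop_def)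

lemma Ale_refl: "a \<in> Acar n p \<Longrightarrow> Ale n a a"
  by (cases a rule: elem_exhaust) (auto simp: Ale_iff mem_Acar_iff lex_le_iff)

context
  fixes n p :: int
  assumes n_pos: "1 \<le> n" and p_pos: "1 \<le> p"
begin

lemma Aprod_closed:
  assumes "a \<in> Acar n p" "b \<in> Acar n p"
  shows "Aprod n p a b \<in> Acar n p"
proof -
  obtain m r \<alpha> k s \<beta> where ab: "a = ((m, r), \<alpha>)" "b = ((k, s), \<beta>)"
    by (metis elem_exhaust)
  obtain M R \<gamma> where eq: "Aprod n p a b = ((M, R), \<gamma>)"
    and graph: "prod_graph n p m r \<alpha> k s \<beta> M R \<gamma>"
    unfolding ab by (rule Aprod_graphE)
  have "((M, R), \<gamma>) \<in> Acar n p"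
    using graph assms n_pos p_pos unfolding ab mem_Acar_iff prod_graph_def lex_le_iff by smt
  then show ?thesis by (simp add: eq)
qed

lemma Aprod_commute:
  assumes "a \<in> Acar n p" "b \<in> Acar n p"
  shows "Aprod n p a b = Aprod n p b a"
proof -
  obtain m r \<alpha> k s \<beta> where ab: "a = ((m, r), \<alpha>)" "b = ((k, s), \<beta>)"
    by (metis elem_exhaust)
  obtain M R \<gamma> where eq: "Aprod n p a b = ((M, R), \<gamma>)"
    and graph: "prod_graph n p m r \<alpha> k s \<beta> M R \<gamma>"
    unfolding ab by (rule Aprod_graphE)
  obtain M' R' \<gamma>' where eq': "Aprod n p b a = ((M', R'), \<gamma>')"
    and graph': "prod_graph n p k s \<beta> m r \<alpha> M' R' \<gamma>'"
    unfolding ab by (rule Aprod_graphE)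
  have "M = M' \<and> R = R' \<and> \<gamma> = \<gamma>'"
    using graph graph' assms p_pos unfolding ab mem_Acar_iff prod_graph_def lex_le_iff by smt
  then show ?thesis by (simp add: eq eq')
qed

lemma Aprod_assoc:
  assumes "a \<in> Acar n p" "b \<in> Acar n p" "c \<in> Acar n p"
  shows "Aprod n p (Aprod n p a b) c = Aprod n p a (Aprod n p b c)"
proof -
  obtain m r \<alpha> k s \<beta> u v \<delta> where abc: "a = ((m, r), \<alpha>)" "b = ((k, s), \<beta>)" "c = ((u, v), \<delta>)"
    by (metis elem_exhaust)
  obtain M R \<gamma> where ab: "Aprod n p a b = ((M, R), \<gamma>)"
    and ab': "prod_graph n p m r \<alpha> k s \<beta> M R \<gamma>"
    unfolding abc by (rule Aprod_graphE)
  obtain K S \<epsilon> where bc: "Aprod n p b c = ((K, S), \<epsilon>)"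
    and bc': "prod_graph n p k s \<beta> u v \<delta> K S \<epsilon>"
    unfolding abc by (rule Aprod_graphE)
  obtain L1 L2 \<zeta> where ab_c: "Aprod n p ((M, R), \<gamma>) c = ((L1, L2), \<zeta>)"
    and ab_c': "prod_graph n p M R \<gamma> u v \<delta> L1 L2 \<zeta>"
    unfolding abc by (rule Aprod_graphE)
  obtain R1 R2 \<rho> where a_bc: "Aprod n p a ((K, S), \<epsilon>) = ((R1, R2), \<rho>)"
    and a_bc': "prod_graph n p m r \<alpha> K S \<epsilon> R1 R2 \<rho>"
    unfolding abc by (rule Aprod_graphE)
  have "L1 = R1 \<and> L2 = R2 \<and> \<zeta> = \<rho>"
    using ab' bc' ab_c' a_bc' assms n_pos p_pos unfolding abc mem_Acar_iff prod_graph_def lex_le_iff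
    by smt
  then show ?thesis by (simp add: ab bc ab_c a_bc)
qed

lemma Atop_mem: "Atop n p \<in> Acar n p"
  using n_pos p_pos by (simp add: Atop_def mem_Acar_iff lex_le_iff)

lemma Abot_mem: "Abot n \<in> Acar n p"
  using n_pos by (simp add: Abot_def mem_Acar_iff lex_le_iff)

lemma Aprod_Atop:
  assumes "a \<in> Acar n p"
  shows "Aprod n p a (Atop n p) = a"
proof -
  obtain m r \<alpha> where a: "a = ((m, r), \<alpha>)"
    by (rule elem_exhaust)
  obtain M R \<gamma> where eq: "Aprod n p a (Atop n p) = ((M, R), \<gamma>)"
    and graph: "prod_graph n p m r \<alpha> n 0 p M R \<gamma>"
    unfolding a Atop_def by (rule Aprod_graphE)
  have "M = m \<and> R = r \<and> \<gamma> = \<alpha>"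
    using graph assms n_pos p_pos unfolding a mem_Acar_iff prod_graph_def lex_le_iff by smt
  then show ?thesis using eq by (simp add: a)
qed

lemma Ale_antisym:
  assumes "a \<in> Acar n p" "b \<in> Acar n p" "Ale n a b" "Ale n b a"
  shows "a = b"
proof -
  obtain m r \<alpha> k s \<beta> where ab: "a = ((m, r), \<alpha>)" "b = ((k, s), \<beta>)"
    by (metis elem_exhaust)
  have "m = k \<and> r = s \<and> \<alpha> = \<beta>"
    using assms n_pos p_pos unfolding ab mem_Acar_iff Ale_iff lex_le_iff by smt
  then show ?thesis by (simp add: ab)
qed

lemma Ale_trans:
  assumes "Ale n a b" "Ale n b c" "a \<in> Acar n p" "b \<in> Acar n p" "c \<in> Acar n p"
  shows "Ale n a c"
proof -
  obtain m r \<alpha> k s \<beta> u v \<delta> where abc: "a = ((m, r), \<alpha>)" "b = ((k, s), \<beta>)" "c = ((u, v), \<delta>)"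
    by (metis elem_exhaust)
  show ?thesis
    using assms n_pos p_pos unfolding abc mem_Acar_iff Ale_iff lex_le_iff by smt
qed

lemma Abot_le: "a \<in> Acar n p \<Longrightarrow> Ale n (Abot n) a"
  using n_pos by (cases a rule: elem_exhaust) (auto simp: Abot_def Ale_iff mem_Acar_iff lex_le_iff)

lemma le_Atop: "a \<in> Acar n p \<Longrightarrow> Ale n a (Atop n p)"
  using n_pos p_pos by (cases a rule: elem_exhaust) (auto simp: Atop_def Ale_iff mem_Acar_iff lex_le_iff)

lemma Ale_Aneg_iff:
  assumes "a \<in> Acar n p" "b \<in> Acar n p"
  shows "Ale n a b \<longleftrightarrow> Ale n (Aneg n p b) (Aneg n p a)"
proof -
  obtain m r \<alpha> k s \<beta> where ab: "a = ((m, r), \<alpha>)" "b = ((k, s), \<beta>)"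
    by (metis elem_exhaust)
  obtain M R \<gamma> where eq: "Aneg n p a = ((M, R), \<gamma>)" and graph: "neg_graph n p m r \<alpha> M R \<gamma>"
    unfolding ab by (rule Aneg_graphE)
  obtain K S \<epsilon> where eq': "Aneg n p b = ((K, S), \<epsilon>)" and graph': "neg_graph n p k s \<beta> K S \<epsilon>"
    unfolding ab by (rule Aneg_graphE)
  have "Ale n ((m, r), \<alpha>) ((k, s), \<beta>) \<longleftrightarrow> Ale n ((K, S), \<epsilon>) ((M, R), \<gamma>)"
    using graph graph' assms n_pos p_pos unfolding ab mem_Acar_iff neg_graph_def Ale_iff lex_le_iff
    by smt
  then show ?thesis using eq eq' by (simp add: ab)
qed

lemma Ale_Aneg_iff_Aprod_le_Abot:
  assumes "a \<in> Acar n p" "b \<in> Acar n p"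
  shows "Ale n a (Aneg n p b) \<longleftrightarrow> Ale n (Aprod n p a b) (Abot n)"
proof -
  obtain m r \<alpha> k s \<beta> where ab: "a = ((m, r), \<alpha>)" "b = ((k, s), \<beta>)"
    by (metis elem_exhaust)
  obtain K S \<epsilon> where neg: "Aneg n p b = ((K, S), \<epsilon>)" and neg': "neg_graph n p k s \<beta> K S \<epsilon>"
    unfolding ab by (rule Aneg_graphE)
  obtain M R \<gamma> where prod: "Aprod n p a b = ((M, R), \<gamma>)"
    and prod': "prod_graph n p m r \<alpha> k s \<beta> M R \<gamma>"
    unfolding ab by (rule Aprod_graphE)
  have "Ale n ((m, r), \<alpha>) ((K, S), \<epsilon>) \<longleftrightarrow> Ale n ((M, R), \<gamma>) ((n, 0), 0)"
    using neg' prod' assms n_pos p_pos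
    unfolding ab mem_Acar_iff neg_graph_def prod_graph_def Ale_iff lex_le_iff
    by smt
  then show ?thesis using neg prod by (simp add: ab Abot_def)
qed

lemma Ainf_lower_bounds:
  assumes "a \<in> Acar n p" "b \<in> Acar n p"
  shows "Ainf n a b \<in> Acar n p" "Ale n (Ainf n a b) a" "Ale n (Ainf n a b) b"
proof -
  obtain m r \<alpha> k s \<beta> where ab: "a = ((m, r), \<alpha>)" "b = ((k, s), \<beta>)"
    by (metis elem_exhaust)
  obtain M R \<gamma> where eq: "Ainf n a b = ((M, R), \<gamma>)" and graph: "inf_graph n m r \<alpha> k s \<beta> M R \<gamma>"
    unfolding ab by (rule Ainf_graphE)
  have "((M, R), \<gamma>) \<in> Acar n p \<and> Ale n ((M, R), \<gamma>) a \<and> Ale n ((M, R), \<gamma>) b"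
    using graph assms n_pos p_pos unfolding ab mem_Acar_iff inf_graph_def Ale_iff lex_le_iff by smt
  then show "Ainf n a b \<in> Acar n p" "Ale n (Ainf n a b) a" "Ale n (Ainf n a b) b"
    by (simp_all add: eq)
qed

lemma Ainf_greatest:
  assumes "a \<in> Acar n p" "b \<in> Acar n p" "c \<in> Acar n p" "Ale n c a" "Ale n c b"
  shows "Ale n c (Ainf n a b)"
proof -
  obtain m r \<alpha> k s \<beta> u v \<delta> where abc: "a = ((m, r), \<alpha>)" "b = ((k, s), \<beta>)" "c = ((u, v), \<delta>)"
    by (metis elem_exhaust)
  obtain M R \<gamma> where eq: "Ainf n a b = ((M, R), \<gamma>)" and graph: "inf_graph n m r \<alpha> k s \<beta> M R \<gamma>"
    unfolding abc by (rule Ainf_graphE)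
  have "Ale n c ((M, R), \<gamma>)"
    using graph assms n_pos p_pos unfolding abc mem_Acar_iff inf_graph_def Ale_iff lex_le_iff by smt
  then show ?thesis by (simp add: eq)
qed

lemma Asup_eq_Aneg_Ainf:
  assumes "a \<in> Acar n p" "b \<in> Acar n p"
  shows "Asup n a b = Aneg n p (Ainf n (Aneg n p a) (Aneg n p b))"
proof -
  obtain m r \<alpha> k s \<beta> where ab: "a = ((m, r), \<alpha>)" "b = ((k, s), \<beta>)"
    by (metis elem_exhaust)
  obtain A1 A2 \<alpha>' where na: "Aneg n p a = ((A1, A2), \<alpha>')" and na': "neg_graph n p m r \<alpha> A1 A2 \<alpha>'"
    unfolding ab by (rule Aneg_graphE)
  obtain B1 B2 \<beta>' where nb: "Aneg n p b = ((B1, B2), \<beta>')" and nb': "neg_graph n p k s \<beta> B1 B2 \<beta>'"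
    unfolding ab by (rule Aneg_graphE)
  obtain I1 I2 \<iota> where inf: "Ainf n ((A1, A2), \<alpha>') ((B1, B2), \<beta>') = ((I1, I2), \<iota>)"
    and inf': "inf_graph n A1 A2 \<alpha>' B1 B2 \<beta>' I1 I2 \<iota>"
    by (rule Ainf_graphE)
  obtain N1 N2 \<nu> where neg: "Aneg n p ((I1, I2), \<iota>) = ((N1, N2), \<nu>)"
    and neg': "neg_graph n p I1 I2 \<iota> N1 N2 \<nu>"
    by (rule Aneg_graphE)
  obtain S1 S2 \<sigma> where sup: "Asup n a b = ((S1, S2), \<sigma>)" and sup': "sup_graph n m r \<alpha> k s \<beta> S1 S2 \<sigma>"
    unfolding ab by (rule Asup_graphE)
  have "S1 = N1 \<and> S2 = N2 \<and> \<sigma> = \<nu>"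
    using na' nb' inf' neg' sup' assms n_pos p_pos
    unfolding ab mem_Acar_iff neg_graph_def inf_graph_def sup_graph_def lex_le_iff by smt
  then show ?thesis using na nb inf neg sup by simp
qed

lemma Ainf_Asup_distrib:
  assumes "a \<in> Acar n p" "b \<in> Acar n p" "c \<in> Acar n p"
  shows "Ainf n a (Asup n b c) = Asup n (Ainf n a b) (Ainf n a c)"
proof -
  obtain m r \<alpha> k s \<beta> u v \<delta> where abc: "a = ((m, r), \<alpha>)" "b = ((k, s), \<beta>)" "c = ((u, v), \<delta>)"
    by (metis elem_exhaust)
  obtain J1 J2 \<iota> where bc: "Asup n b c = ((J1, J2), \<iota>)" and bc': "sup_graph n k s \<beta> u v \<delta> J1 J2 \<iota>"
    unfolding abc by (rule Asup_graphE)
  obtain L1 L2 \<theta> where lhs: "Ainf n a ((J1, J2), \<iota>) = ((L1, L2), \<theta>)"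
    and lhs': "inf_graph n m r \<alpha> J1 J2 \<iota> L1 L2 \<theta>"
    unfolding abc by (rule Ainf_graphE)
  obtain P1 P2 \<pi> where ab: "Ainf n a b = ((P1, P2), \<pi>)" and ab': "inf_graph n m r \<alpha> k s \<beta> P1 P2 \<pi>"
    unfolding abc by (rule Ainf_graphE)
  obtain Q1 Q2 \<kappa> where ac: "Ainf n a c = ((Q1, Q2), \<kappa>)" and ac': "inf_graph n m r \<alpha> u v \<delta> Q1 Q2 \<kappa>"
    unfolding abc by (rule Ainf_graphE)
  obtain R1 R2 \<rho> where rhs: "Asup n ((P1, P2), \<pi>) ((Q1, Q2), \<kappa>) = ((R1, R2), \<rho>)"
    and rhs': "sup_graph n P1 P2 \<pi> Q1 Q2 \<kappa> R1 R2 \<rho>"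
    by (rule Asup_graphE)
  have "L1 = R1 \<and> L2 = R2 \<and> \<theta> = \<rho>"
    using bc' lhs' ab' ac' rhs' assms n_pos p_pos
    unfolding abc mem_Acar_iff inf_graph_def sup_graph_def lex_le_iff by smt
  then show ?thesis using bc lhs ab ac rhs by simp
qed

lemma Ainf_is_glb:
  assumes "a \<in> Acar n p" "b \<in> Acar n p"
  shows "is_glb (Acar n p) (Ale n) a b (Ainf n a b)"
  using Ainf_lower_bounds[OF assms] Ainf_greatest[OF assms] unfolding is_glb_def by blast

lemma Ameet_eq_Ainf:
  assumes "a \<in> Acar n p" "b \<in> Acar n p"
  shows "Ameet n p a b = Ainf n a b"
  unfolding Ameet_def using Ale_antisym Ainf_is_glb[OF assms] by (rule The_glb_eq)

lemma Asup_is_lub: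
  assumes "a \<in> Acar n p" "b \<in> Acar n p"
  shows "is_lub (Acar n p) (Ale n) a b (Asup n a b)"
  unfolding Asup_eq_Aneg_Ainf[OF assms]
  using Aneg_closed Aneg_Aneg Ale_Aneg_iff assms
  by (rule is_lub_antitone_involution) (simp_all add: Ainf_is_glb Aneg_closed assms)

lemma Ajoin_eq_Asup:
  assumes "a \<in> Acar n p" "b \<in> Acar n p"
  shows "Ajoin n p a b = Asup n a b"
  unfolding Ajoin_def using Ale_antisym Asup_is_lub[OF assms] by (rule The_lub_eq)

lemma Ameet_Ajoin_distrib:
  assumes "a \<in> Acar n p" "b \<in> Acar n p" "c \<in> Acar n p"
  shows "Ameet n p a (Ajoin n p b c) = Ajoin n p (Ameet n p a b) (Ameet n p a c)"
proof -
  have "Asup n b c \<in> Acar n p"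
    using Asup_is_lub[OF assms(2,3)] by (simp add: is_lub_def)
  then show ?thesis
    using assms Ainf_lower_bounds(1)
    by (simp add: Ameet_eq_Ainf Ajoin_eq_Asup Ainf_Asup_distrib)
qed

lemma Aimp_residuation:
  assumes "a \<in> Acar n p" "b \<in> Acar n p" "c \<in> Acar n p"
  shows "Ale n (Aprod n p a b) c \<longleftrightarrow> Ale n a (Aimp n p b c)"
  unfolding Aimp_def
  using Aprod_closed Aneg_closed Aneg_Aneg Aprod_assoc Ale_Aneg_iff_Aprod_le_Abot assms
  by (rule residuation_of_orthogonality)

lemma Aimp_Abot: "a \<in> Acar n p \<Longrightarrow> Aimp n p a (Abot n) = Aneg n p a"
  by (simp add: Aimp_def Aneg_Abot Aprod_Atop)

lemma Aimp_Aimp_Abot: "a \<in> Acar n p \<Longrightarrow> Aimp n p (Aimp n p a (Abot n)) (Abot n) = a"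
  by (simp add: Aimp_Abot Aneg_closed Aneg_Aneg)

end

theorem theorem3p1:
  fixes n p :: int
  assumes "n \<ge> 1" and "p \<ge> 1"
  shows
    "(\<forall>a\<in>Acar n p. \<forall>b\<in>Acar n p. Aprod n p a b \<in> Acar n p)
   \<and> (\<forall>a\<in>Acar n p. \<forall>b\<in>Acar n p. \<forall>c\<in>Acar n p.
        Aprod n p (Aprod n p a b) c = Aprod n p a (Aprod n p b c))
   \<and> (\<forall>a\<in>Acar n p. \<forall>b\<in>Acar n p. Aprod n p a b = Aprod n p b a)
   \<and> Atop n p \<in> Acar n p
   \<and> (\<forall>a\<in>Acar n p. Aprod n p a (Atop n p) = a)
   \<and> (\<forall>a\<in>Acar n p. Ale n a a)
   \<and> (\<forall>a\<in>Acar n p. \<forall>b\<in>Acar n p. Ale n a b \<and> Ale n b a \<longrightarrow> a = b)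
   \<and> (\<forall>a\<in>Acar n p. \<forall>b\<in>Acar n p. \<forall>c\<in>Acar n p. Ale n a b \<and> Ale n b c \<longrightarrow> Ale n a c)
   \<and> (\<forall>a\<in>Acar n p. \<forall>b\<in>Acar n p. \<exists>z. is_glb (Acar n p) (Ale n) a b z)
   \<and> (\<forall>a\<in>Acar n p. \<forall>b\<in>Acar n p. \<exists>z. is_lub (Acar n p) (Ale n) a b z)
   \<and> (\<forall>a\<in>Acar n p. \<forall>b\<in>Acar n p. \<forall>c\<in>Acar n p.
        Ameet n p a (Ajoin n p b c) = Ajoin n p (Ameet n p a b) (Ameet n p a c))
   \<and> Abot n \<in> Acar n p
   \<and> (\<forall>a\<in>Acar n p. Ale n (Abot n) a \<and> Ale n a (Atop n p))
   \<and> (\<forall>a\<in>Acar n p. \<forall>b\<in>Acar n p. \<forall>c\<in>Acar n p.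
        Ale n (Aprod n p a b) c \<longleftrightarrow> Ale n a (Aimp n p b c))
   \<and> (\<forall>a\<in>Acar n p. Aimp n p (Aimp n p a (Abot n)) (Abot n) = a)"
  \<comment> \<open>\<open>Ale_trans\<close> is tried last: its middle element must come from a hypothesis.\<close>
  by (intro conjI ballI impI exI; (elim conjE)?)
    (assumption | rule Aprod_closed[OF assms] Aprod_assoc[OF assms] Aprod_commute[OF assms]
      Atop_mem[OF assms] Aprod_Atop[OF assms] Ale_refl Ale_antisym[OF assms]
      Ainf_is_glb[OF assms] Asup_is_lub[OF assms] Ameet_Ajoin_distrib[OF assms] Abot_mem[OF assms]
      Abot_le[OF assms] le_Atop[OF assms] Aimp_residuation[OF assms] Aimp_Aimp_Abot[OF assms]
      Ale_trans[OF assms])+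

end
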